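(* Let $k\ge 0$ be an integer and let $G$ be an undirected graph of degeneracy $k$. Then $f(G)\leq \frac{k-1}{k+1}\,n(G)$ if $k$ is odd, and $f(G)\leq \frac{k}{k+2}\,n(G)$ if $k$ is even.
   Context: All graphs are finite and simple. $n(G)$ is the number of vertices and $f(G)$ is the minimum size of a feedback vertex set of $G$ (a set $F\subseteq V(G)$ with $G-F$ acyclic). An ordering $\phi$ of $V(G)$ is a $k$-elimination ordering if each vertex has at most $k$ neighbours preceding it in $\phi$; the degeneracy of $G$ is the least $k$ such that $G$ has a $k$-elimination ordering. *)

theory Defs
  imports Complex_Main
begin

definition simple_graph :: "'a set \<Rightarrow> ('a \<Rightarrow> 'a \<Rightarrow> bool) \<Rightarrow> bool" where
  "simple_graph V E \<longleftrightarrow> finite V \<and> (\<forall>u v. E u v \<longrightarrow> u \<in> V \<and> v \<in> V)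
     \<and> (\<forall>u v. E u v \<longrightarrow> E v u) \<and> (\<forall>v. \<not> E v v)"

definition is_cycle_in :: "('a \<Rightarrow> 'a \<Rightarrow> bool) \<Rightarrow> 'a set \<Rightarrow> 'a list \<Rightarrow> bool" where
  "is_cycle_in E S cs \<longleftrightarrow> length cs \<ge> 3 \<and> distinct cs \<and> set cs \<subseteq> S
     \<and> (\<forall>i < length cs. E (cs ! i) (cs ! (Suc i mod length cs)))"

definition acyclic_induced :: "('a \<Rightarrow> 'a \<Rightarrow> bool) \<Rightarrow> 'a set \<Rightarrow> bool" where
  "acyclic_induced E S \<longleftrightarrow> \<not> (\<exists>cs. is_cycle_in E S cs)"

definition is_fvs :: "'a set \<Rightarrow> ('a \<Rightarrow> 'a \<Rightarrow> bool) \<Rightarrow> 'a set \<Rightarrow> bool" where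
  "is_fvs V E F \<longleftrightarrow> F \<subseteq> V \<and> acyclic_induced E (V - F)"

definition fvs_number :: "'a set \<Rightarrow> ('a \<Rightarrow> 'a \<Rightarrow> bool) \<Rightarrow> nat" where
  "fvs_number V E = Min (card ` {F. is_fvs V E F})"

definition elim_ordering :: "'a set \<Rightarrow> ('a \<Rightarrow> 'a \<Rightarrow> bool) \<Rightarrow> nat \<Rightarrow> 'a list \<Rightarrow> bool" where
  "elim_ordering V E k xs \<longleftrightarrow> distinct xs \<and> set xs = V
     \<and> (\<forall>i < length xs. card {j. j < i \<and> E (xs ! j) (xs ! i)} \<le> k)"

definition degeneracy :: "'a set \<Rightarrow> ('a \<Rightarrow> 'a \<Rightarrow> bool) \<Rightarrow> nat" where
  "degeneracy V E = (LEAST k. \<exists>xs. elim_ordering V E k xs)"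

end

theory Submission
  imports Defs
begin

text \<open>Fix a k-elimination ordering and put t = k div 2. Colour the vertices greedily along
  the ordering with t + 1 colours so that every vertex has at most one earlier neighbour of its
  own colour; this is possible because a vertex has at most k < 2(t + 1) earlier neighbours.
  Each colour class then induces a forest: the latest vertex of a cycle inside the class would
  have two earlier neighbours in the class. The largest class has at least n/(t + 1) vertices,
  so its complement is a feedback vertex set of size at most t n/(t + 1), which is
  (k - 1) n/(k + 1) for odd k and k n/(k + 2) for even k.\<close>

lemma elim_ordering_degeneracy:
  assumes "finite V"
  shows "\<exists>xs. elim_ordering V E (degeneracy V E) xs"
proof -
  obtain ys where ys: "set ys = V" "distinct ys"
    using finite_distinct_list[OF assms] by auto
  have "elim_ordering V E (length ys) ys"
    unfolding elim_ordering_def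
  proof (intro conjI allI impI)
    fix i assume "i < length ys"
    moreover have "card {j. j < i \<and> E (ys ! j) (ys ! i)} \<le> card {..<i}"
      by (rule card_mono) auto
    ultimately show "card {j. j < i \<and> E (ys ! j) (ys ! i)} \<le> length ys"
      by simp
  qed (use ys in auto)
  then show ?thesis
    unfolding degeneracy_def by (rule LeastI_ex[OF exI, OF exI])
qed

lemma greedy_colouring:
  fixes R :: "nat \<Rightarrow> nat \<Rightarrow> bool"
  assumes "\<forall>i<L. card {j. j < i \<and> R j i} \<le> k" and "k < 2 * m"
  shows "\<exists>c. (\<forall>i<L. c i < m) \<and> (\<forall>i<L. card {j. j < i \<and> R j i \<and> c j = c i} \<le> 1)"
  using assms(1)
proof (induction L)
  case 0
  show ?case by auto
next
  case (Suc n)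
  then obtain c where c_range: "\<forall>i<n. c i < m"
    and c_good: "\<forall>i<n. card {j. j < i \<and> R j i \<and> c j = c i} \<le> 1"
    by auto
  define A where "A col = {j. j < n \<and> R j n \<and> c j = col}" for col
  have "\<exists>col<m. card (A col) \<le> 1"
  proof (rule ccontr)
    assume "\<not> ?thesis"
    then have "(\<Sum>col<m. 2) \<le> (\<Sum>col<m. card (A col))"
      by (intro sum_mono) auto
    also have "\<dots> = card (\<Union>col<m. A col)"
      by (rule card_UN_disjoint[symmetric]) (auto simp: A_def)
    also have "(\<Union>col<m. A col) = {j. j < n \<and> R j n}"
      using c_range by (auto simp: A_def)
    also have "card \<dots> \<le> k"
      using Suc.prems by auto
    finally show False
      using assms(2) by simp
  qed
  then obtain col where col: "col < m" "card (A col) \<le> 1"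
    by auto
  show ?case
  proof (intro exI[of _ "c(n := col)"] conjI allI impI)
    fix i assume "i < Suc n"
    then show "(c(n := col)) i < m"
      using c_range col by auto
  next
    fix i assume i: "i < Suc n"
    show "card {j. j < i \<and> R j i \<and> (c(n := col)) j = (c(n := col)) i} \<le> 1"
    proof (cases "i = n")
      case True
      then have "{j. j < i \<and> R j i \<and> (c(n := col)) j = (c(n := col)) i} = A col"
        by (auto simp: A_def)
      then show ?thesis
        using col by simp
    next
      case False
      with i have "{j. j < i \<and> R j i \<and> (c(n := col)) j = (c(n := col)) i}
          = {j. j < i \<and> R j i \<and> c j = c i}"
        by auto
      then show ?thesis
        using c_good False i by simp
    qed
  qed
qed

lemma is_cycle_in_two_neighbours:
  assumes "is_cycle_in E S cs" and sym: "\<And>u v. E u v \<Longrightarrow> E v u" and "v \<in> set cs"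
  shows "\<exists>u w. u \<in> set cs \<and> w \<in> set cs \<and> u \<noteq> w \<and> u \<noteq> v \<and> w \<noteq> v \<and> E u v \<and> E w v"
proof -
  define l where "l = length cs"
  have l: "l \<ge> 3" "distinct cs" and step: "\<forall>i<l. E (cs ! i) (cs ! (Suc i mod l))"
    using assms(1) by (auto simp: is_cycle_in_def l_def)
  obtain a where a: "a < l" "cs ! a = v"
    using assms(3) by (auto simp: in_set_conv_nth l_def)
  define b where "b = (if a = 0 then l - 1 else a - 1)"
  define d where "d = Suc a mod l"
  have "b < l" "d < l" "b \<noteq> a" "d \<noteq> a" "b \<noteq> d" "Suc b mod l = a"
    using a(1) l(1) by (auto simp: b_def d_def mod_Suc)
  moreover from this have "cs ! b \<noteq> cs ! d" "cs ! b \<noteq> v" "cs ! d \<noteq> v"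
    using l(2) a by (auto simp: l_def nth_eq_iff_index_eq)
  moreover have "E (cs ! b) v" "E (cs ! d) v"
    using step a \<open>b < l\<close> \<open>Suc b mod l = a\<close> by (auto simp: d_def intro: sym)
  ultimately show ?thesis
    by (intro exI[of _ "cs ! b"] exI[of _ "cs ! d"]) (simp add: l_def)
qed

lemma acyclic_induced_if_one_earlier_neighbour:
  fixes f :: "nat \<Rightarrow> 'a"
  assumes sym: "\<And>u v. E u v \<Longrightarrow> E v u" and "finite C"
    and earlier: "\<forall>i\<in>C. card {j \<in> C. j < i \<and> E (f j) (f i)} \<le> 1"
  shows "acyclic_induced E (f ` C)"
  unfolding acyclic_induced_def
proof
  assume "\<exists>cs. is_cycle_in E (f ` C) cs"
  then obtain cs where cs: "is_cycle_in E (f ` C) cs"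
    by blast
  then have cs_C: "set cs \<subseteq> f ` C" and "cs \<noteq> []"
    by (auto simp: is_cycle_in_def)
  define I where "I = {j \<in> C. f j \<in> set cs}"
  have "finite I"
    using \<open>finite C\<close> by (simp add: I_def)
  have "I \<noteq> {}"
    using hd_in_set[OF \<open>cs \<noteq> []\<close>] cs_C by (force simp: I_def)
  define i where "i = Max I"
  have "i \<in> I" and I_le: "\<And>j. j \<in> I \<Longrightarrow> j \<le> i"
    using \<open>finite I\<close> \<open>I \<noteq> {}\<close> by (simp_all add: i_def)
  then have i: "i \<in> C" "f i \<in> set cs"
    by (simp_all add: I_def)
  obtain u w where uw: "u \<in> set cs" "w \<in> set cs" "u \<noteq> w" "u \<noteq> f i" "w \<noteq> f i"
      "E u (f i)" "E w (f i)"
    using is_cycle_in_two_neighbours[OF cs sym i(2)] by blast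
  obtain ju jw where ju: "ju \<in> C" "f ju = u" and jw: "jw \<in> C" "f jw = w"
    using uw(1,2) cs_C by blast
  have "ju \<le> i" "jw \<le> i"
    using I_le ju jw uw(1,2) by (simp_all add: I_def)
  then have "{ju, jw} \<subseteq> {j \<in> C. j < i \<and> E (f j) (f i)}"
    using ju jw uw by (auto simp: le_less)
  then have "card {ju, jw} \<le> card {j \<in> C. j < i \<and> E (f j) (f i)}"
    using \<open>finite C\<close> by (intro card_mono) auto
  moreover have "card {ju, jw} = 2"
    using uw(3) ju(2) jw(2) by (cases "ju = jw") auto
  ultimately show False
    using earlier i(1) by fastforce
qed

lemma exists_large_colour_class:
  assumes "\<forall>i<L. c i < (m::nat)" and "0 < m"
  shows "\<exists>col<m. L \<le> m * card {i. i < L \<and> c i = col}"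
proof (rule ccontr)
  define C where "C col = {i. i < L \<and> c i = col}" for col
  assume "\<not> ?thesis"
  then have small: "\<forall>col<m. m * card (C col) < L"
    by (auto simp: C_def)
  have "{..<L} = (\<Union>col<m. C col)"
    using assms by (auto simp: C_def)
  then have "L = card (\<Union>col<m. C col)"
    by (metis card_lessThan)
  also have "\<dots> = (\<Sum>col<m. card (C col))"
    by (rule card_UN_disjoint) (auto simp: C_def)
  finally have "m * L = (\<Sum>col<m. m * card (C col))"
    by (simp add: sum_distrib_left)
  also have "\<dots> < (\<Sum>col<m. L)"
    using small assms by (intro sum_strict_mono) auto
  finally show False
    by simp
qed

lemma fvs_number_le_complement:
  assumes "finite V" and "S \<subseteq> V" and "acyclic_induced E S"
  shows "fvs_number V E \<le> card V - card S"
proof -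
  have "{F. is_fvs V E F} \<subseteq> Pow V"
    by (auto simp: is_fvs_def)
  then have "finite {F. is_fvs V E F}"
    using assms(1) finite_subset by blast
  moreover have "is_fvs V E (V - S)"
    using assms(2,3) by (simp add: is_fvs_def double_diff)
  ultimately have "fvs_number V E \<le> card (V - S)"
    unfolding fvs_number_def by (auto intro: Min_le)
  also have "\<dots> = card V - card S"
    using assms(1,2) by (meson card_Diff_subset finite_subset)
  finally show ?thesis .
qed

lemma large_induced_forest:
  assumes "simple_graph V E" and "elim_ordering V E k xs"
  shows "\<exists>S\<subseteq>V. acyclic_induced E S \<and> card V \<le> (k div 2 + 1) * card S"
proof -
  define m where "m = k div 2 + 1"
  define L where "L = length xs"
  have sym: "\<And>u v. E u v \<Longrightarrow> E v u"
    using assms(1) by (auto simp: simple_graph_def)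
  have xs: "distinct xs" "set xs = V" "\<forall>i<L. card {j. j < i \<and> E (xs ! j) (xs ! i)} \<le> k"
    using assms(2) by (auto simp: elim_ordering_def L_def)
  have "k < 2 * m"
    unfolding m_def by presburger
  then obtain c where c_range: "\<forall>i<L. c i < m"
    and c_good: "\<forall>i<L. card {j. j < i \<and> E (xs ! j) (xs ! i) \<and> c j = c i} \<le> 1"
    using greedy_colouring[of L "\<lambda>j i. E (xs ! j) (xs ! i)" k m] xs(3) by blast
  obtain col where col: "L \<le> m * card {i. i < L \<and> c i = col}"
    using exists_large_colour_class[OF c_range] by (auto simp: m_def)
  define C where "C = {i. i < L \<and> c i = col}"
  define S where "S = (\<lambda>i. xs ! i) ` C"
  have "S \<subseteq> V"
    using xs(2) by (auto simp: S_def C_def L_def)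
  moreover have "card V \<le> m * card S"
  proof -
    have "card S = card C"
      unfolding S_def using xs(1)
      by (intro card_image) (auto simp: inj_on_def C_def L_def nth_eq_iff_index_eq)
    moreover have "card V = L"
      using distinct_card[OF xs(1)] xs(2) by (simp add: L_def)
    ultimately show ?thesis
      using col by (simp add: C_def)
  qed
  moreover have "acyclic_induced E S"
    unfolding S_def
  proof (rule acyclic_induced_if_one_earlier_neighbour[OF sym])
    show "finite C"
      by (simp add: C_def)
    show "\<forall>i\<in>C. card {j \<in> C. j < i \<and> E (xs ! j) (xs ! i)} \<le> 1"
    proof
      fix i assume "i \<in> C"
      then have "i < L" "c i = col"
        by (simp_all add: C_def)
      then have "{j \<in> C. j < i \<and> E (xs ! j) (xs ! i)} = {j. j < i \<and> E (xs ! j) (xs ! i) \<and> c j = c i}"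
        by (auto simp: C_def)
      then show "card {j \<in> C. j < i \<and> E (xs ! j) (xs ! i)} \<le> 1"
        using c_good \<open>i < L\<close> by simp
    qed
  qed
  ultimately show ?thesis
    unfolding m_def by blast
qed

lemma fvs_number_elim_ordering_bound:
  assumes "simple_graph V E" and "elim_ordering V E k xs"
  shows "(k div 2 + 1) * fvs_number V E \<le> k div 2 * card V"
proof -
  define m where "m = k div 2 + 1"
  obtain S where S: "S \<subseteq> V" "acyclic_induced E S" "card V \<le> m * card S"
    using large_induced_forest[OF assms] unfolding m_def by blast
  have "finite V"
    using assms(1) by (simp add: simple_graph_def)
  then have "m * fvs_number V E \<le> m * (card V - card S)"
    using S(1,2) by (intro mult_le_mono2 fvs_number_le_complement)
  also have "\<dots> \<le> m * card V - card V"
    using S(3) by (simp add: diff_mult_distrib2)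
  also have "\<dots> = k div 2 * card V"
    by (simp add: m_def)
  finally show ?thesis
    by (simp add: m_def)
qed

theorem mainTheorem3:
  fixes V :: "'a set" and E :: "'a \<Rightarrow> 'a \<Rightarrow> bool" and k :: nat
  assumes "simple_graph V E"
    and "degeneracy V E = k"
  shows "(odd k \<longrightarrow> real (fvs_number V E) \<le> (real k - 1) / (real k + 1) * real (card V))
       \<and> (even k \<longrightarrow> real (fvs_number V E) \<le> real k / (real k + 2) * real (card V))"
proof -
  define t where "t = k div 2"
  have "finite V"
    using assms(1) by (simp add: simple_graph_def)
  then obtain xs where "elim_ordering V E k xs"
    using elim_ordering_degeneracy assms(2) by blast
  then have "(t + 1) * fvs_number V E \<le> t * card V"
    unfolding t_def by (rule fvs_number_elim_ordering_bound[OF assms(1)])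
  then have "(real t + 1) * real (fvs_number V E) \<le> real t * real (card V)"
    by (metis of_nat_1 of_nat_add of_nat_le_iff of_nat_mult)
  then have bound: "real (fvs_number V E) \<le> real t / (real t + 1) * real (card V)"
    by (simp add: field_simps)
  have "k = 2 * t + 1" if "odd k"
    using that unfolding t_def by presburger
  moreover have "k = 2 * t" if "even k"
    using that unfolding t_def by presburger
  ultimately have "odd k \<Longrightarrow> (real k - 1) / (real k + 1) = real t / (real t + 1)"
    and "even k \<Longrightarrow> real k / (real k + 2) = real t / (real t + 1)"
    by (simp_all add: field_simps)
  with bound show ?thesis
    by simp
qed

end
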